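(* Let $K>0$, $\alpha_1,m_1,\alpha_2,m_2\in(0,1]$, and let $f,g:[0,K]\to[0,\infty)$ be such that $f$ is $(\alpha_1,m_1)$-convex and $g$ is $(\alpha_2,m_2)$-convex on $[0,K]$. Let $0\le a<b\le K$ with $a/m_1\le K$, $a/m_2\le K$, and $f,g\in L^1[a,b]$. Then \begin{align*} \frac{1}{b-a}\int_a^b f(x)^{\frac{x-a}{b-a}}\, g(x)^{\frac{b-x}{b-a}}\,dx &\le \frac{1}{\alpha_1+2}f(b)+\frac{m_1}{2(\alpha_1+2)}f\!\left(\frac{a}{m_1}\right)\\ &\quad+\frac{1}{(\alpha_2+1)(\alpha_2+2)}g(b)+\frac{m_2(\alpha_2^2+3\alpha_2)}{2(\alpha_2+1)(\alpha_2+2)}g\!\left(\frac{a}{m_2}\right). \end{align*}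
   Context: For $(\alpha,m)\in[0,1]^2$ and $K>0$, a function $h:[0,K]\to\mathbb{R}$ is $(\alpha,m)$-convex if $h(tx+m(1-t)y)\le t^{\alpha}h(x)+m(1-t^{\alpha})h(y)$ for all $x,y\in[0,K]$ and $t\in[0,1]$. The convention $0^0=1$ is used in the integrand. *)

theory Defs
  imports "HOL-Analysis.Analysis"
begin

text \<open>Real power with the convention 0^0 = 1 (powr has 0 powr 0 = 0).\<close>
definition pow0 :: "real \<Rightarrow> real \<Rightarrow> real" where
  "pow0 x y = (if x = 0 \<and> y = 0 then 1 else x powr y)"

definition alpha_m_convex :: "real \<Rightarrow> real \<Rightarrow> real \<Rightarrow> (real \<Rightarrow> real) \<Rightarrow> bool" where
  "alpha_m_convex \<alpha> m K h \<longleftrightarrow>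
     (\<forall>x\<in>{0..K}. \<forall>y\<in>{0..K}. \<forall>t\<in>{0..1}.
        h (t * x + m * (1 - t) * y) \<le> pow0 t \<alpha> * h x + m * (1 - pow0 t \<alpha>) * h y)"

end

theory Submission imports Defs begin

(* Hermite-Hadamard type bound for the "geometric interpolation" of two
   (alpha,m)-convex functions.  Write t = (x - a)/(b - a) for x in [a,b].

   1. Pointwise: by the weighted AM-GM inequality (Young's inequality),
        f x ^ t * g x ^ (1 - t) <= t * f x + (1 - t) * g x,
      and (alpha,m)-convexity applied to the points b and a/m (note that
      t*b + m*(1 - t)*(a/m) = x) bounds f x and g x by the chord bound
        amc_bound alpha m (h b) (h (a/m)) t.
   2. The resulting majorant of the integrand is a linear combination of powers
      of t; its integral over [a,b] is computed explicitly from the integral of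
      t^beta (substitution into the integral of x^beta over [0,1]).
   3. Since the integrand is measurable and squeezed between 0 and an integrable
      majorant, it is integrable and its integral is bounded by the majorant's.
   The theorem follows after weakening alpha1 <= 1 in one coefficient. *)

lemma pow0_nonneg: "0 \<le> pow0 x y"
  by (simp add: pow0_def)

lemma pow0_eq_powr: "y \<noteq> 0 \<Longrightarrow> pow0 x y = x powr y"
  by (simp add: pow0_def)

lemma pow0_measurable [measurable]:
  assumes [measurable]: "F \<in> borel_measurable M" "G \<in> borel_measurable M"
  shows "(\<lambda>x. pow0 (F x) (G x)) \<in> borel_measurable M"
  unfolding pow0_def by measurable

text \<open>Weighted AM-GM: a geometric mean with weights t, 1 - t is at most the
  arithmetic one.  The degenerate weights and bases are exactly where pow0
  differs from powr.\<close>

lemma pow0_weighted_am_gm: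
  fixes F G t :: real
  assumes "0 \<le> F" "0 \<le> G" "0 \<le> t" "t \<le> 1"
  shows "pow0 F t * pow0 G (1 - t) \<le> t * F + (1 - t) * G"
proof -
  consider "t = 0" | "t = 1" | "F = 0 \<or> G = 0" | "0 < t" "t < 1" "F \<noteq> 0" "G \<noteq> 0"
    using assms by linarith
  then show ?thesis
  proof cases
    case 4
    then have "pow0 F t * pow0 G (1 - t) = F powr t * G powr (1 - t)"
      by (simp add: pow0_def)
    also have "\<dots> \<le> t * F + (1 - t) * G"
      using Youngs_inequality_0[of t "1 - t" F G] 4 assms by auto
    finally show ?thesis .
  qed (use assms in \<open>auto simp: pow0_def\<close>)
qed

text \<open>If F and G are integrable on S, then the product of their pow0-powers
  (with measurable exponents) is measurable on S: outside S the functions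
  can be replaced by 0.\<close>

lemma set_borel_measurable_pow0_product:
  fixes F G :: "'a \<Rightarrow> real"
  assumes "set_integrable M S F" "set_integrable M S G"
    and [measurable]: "S \<in> sets M" "u \<in> borel_measurable M" "v \<in> borel_measurable M"
  shows "set_borel_measurable M S (\<lambda>x. pow0 (F x) (u x) * pow0 (G x) (v x))"
proof -
  have [measurable]: "(\<lambda>x. indicator S x * F x) \<in> borel_measurable M"
    "(\<lambda>x. indicator S x * G x) \<in> borel_measurable M"
    using assms(1,2) unfolding set_integrable_def by (simp_all add: borel_measurable_integrable)
  have "(\<lambda>x. indicator S x *\<^sub>R (pow0 (F x) (u x) * pow0 (G x) (v x)))
      = (\<lambda>x. indicator S x * (pow0 (indicator S x * F x) (u x) * pow0 (indicator S x * G x) (v x)))"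
    by (rule ext) (simp add: indicator_def)
  then show ?thesis
    unfolding set_borel_measurable_def by (simp only:) measurable
qed

subsection \<open>The chord bound of an (alpha,m)-convex function\<close>

text \<open>The right-hand side of the (alpha,m)-convexity inequality, as a function
  of the parameter t, with the values A = h b and B = h (a/m) at the endpoints.\<close>

definition amc_bound :: "real \<Rightarrow> real \<Rightarrow> real \<Rightarrow> real \<Rightarrow> real \<Rightarrow> real" where
  "amc_bound \<alpha> m A B t = t powr \<alpha> * A + m * (1 - t powr \<alpha>) * B"

text \<open>On the segment from a to b, an (alpha,m)-convex function lies below its
  chord bound: the point a + t (b - a) is the combination t b + m (1 - t) (a/m).\<close>

lemma alpha_m_convex_segment_bound:
  assumes conv: "alpha_m_convex \<alpha> m K h" and "\<alpha> \<noteq> 0" "m \<noteq> 0"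
    and "0 \<le> b" "b \<le> K" "0 \<le> a / m" "a / m \<le> K" "0 \<le> t" "t \<le> 1"
  shows "h (a + t * (b - a)) \<le> amc_bound \<alpha> m (h b) (h (a / m)) t"
proof -
  have point: "t * b + m * (1 - t) * (a / m) = a + t * (b - a)"
    using \<open>m \<noteq> 0\<close> by (simp add: algebra_simps)
  show ?thesis
    using conv[unfolded alpha_m_convex_def, rule_format, of b "a / m" t] assms
    unfolding point amc_bound_def by (simp add: pow0_eq_powr)
qed

subsection \<open>Integrals of powers of the normalized variable\<close>

text \<open>The integral of t^beta over [a,b] for t = (x - a)/(b - a), obtained from
  the integral of x^beta over [0,1] by an affine change of variables.\<close>

lemma has_integral_normalized_powr:
  fixes a b \<beta> :: real
  assumes "a < b" "\<beta> > -1"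
  shows "((\<lambda>x. ((x - a) / (b - a)) powr \<beta>) has_integral ((b - a) / (\<beta> + 1))) {a..b}"
proof -
  have "((\<lambda>x. x powr \<beta>) has_integral (1 / (\<beta> + 1))) (cbox 0 1)"
    using has_integral_powr_from_0[of \<beta> 1] assms by simp
  from has_integral_affinity'[OF this, of "1 / (b - a)" "-a / (b - a)"]
  have H: "((\<lambda>x. ((1 / (b - a)) *\<^sub>R x + -a / (b - a)) powr \<beta>)
            has_integral ((1 / (\<beta> + 1)) /\<^sub>R (1 / (b - a)) ^ DIM(real)))
           (cbox ((0 - -a / (b - a)) /\<^sub>R (1 / (b - a))) ((1 - -a / (b - a)) /\<^sub>R (1 / (b - a))))"
    using assms by auto
  have "(0 - -a / (b - a)) /\<^sub>R (1 / (b - a)) = a" "(1 - -a / (b - a)) /\<^sub>R (1 / (b - a)) = b"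
    using assms by (auto simp: field_simps)
  moreover have "(\<lambda>x. ((1 / (b - a)) *\<^sub>R x + -a / (b - a)) powr \<beta>) = (\<lambda>x. ((x - a) / (b - a)) powr \<beta>)"
    by (simp add: diff_divide_distrib)
  moreover have "(1 / (\<beta> + 1)) /\<^sub>R (1 / (b - a)) ^ DIM(real) = (b - a) / (\<beta> + 1)"
    by simp
  ultimately show ?thesis
    using H by (simp add: cbox_interval)
qed

lemma has_integral_rising_chord_bound:
  fixes a b \<alpha> m A B :: real
  assumes "a < b" "\<alpha> > -1"
  defines "T \<equiv> \<lambda>x. (x - a) / (b - a)"
  shows "((\<lambda>x. T x * amc_bound \<alpha> m A B (T x)) has_integral
          (b - a) * (A / (\<alpha> + 2) + m * \<alpha> / (2 * (\<alpha> + 2)) * B)) {a..b}"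
proof -
  have powr_alpha1: "((\<lambda>x. T x powr (\<alpha> + 1)) has_integral (b - a) / (\<alpha> + 1 + 1)) {a..b}"
    and powr_1: "((\<lambda>x. T x powr 1) has_integral (b - a) / (1 + 1)) {a..b}"
    unfolding T_def by (rule has_integral_normalized_powr; use assms in simp)+
  have expand: "T x * amc_bound \<alpha> m A B (T x) = (A - m * B) * T x powr (\<alpha> + 1) + m * B * T x powr 1"
    if "x \<in> {a..b}" for x
  proof -
    have "0 \<le> T x" using that assms by (simp add: T_def)
    then show ?thesis by (simp add: amc_bound_def powr_add algebra_simps)
  qed
  have closed_form: "(A - m * B) * ((b - a) / (\<alpha> + 1 + 1)) + m * B * ((b - a) / (1 + 1))
      = (b - a) * (A / (\<alpha> + 2) + m * \<alpha> / (2 * (\<alpha> + 2)) * B)"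
  proof -
    have nz: "\<alpha> + 2 \<noteq> 0" using assms by auto
    have "m * \<alpha> / (2 * (\<alpha> + 2)) = m / 2 - m / (\<alpha> + 2)" "\<alpha> + 1 + 1 = \<alpha> + 2"
      using nz by (simp_all add: field_simps)
    then show ?thesis
      by (simp only:) (simp add: algebra_simps diff_divide_distrib add_divide_distrib)
  qed
  have "((\<lambda>x. (A - m * B) * T x powr (\<alpha> + 1) + m * B * T x powr 1) has_integral
          (A - m * B) * ((b - a) / (\<alpha> + 1 + 1)) + m * B * ((b - a) / (1 + 1))) {a..b}"
    using has_integral_add[OF has_integral_mult_right[OF powr_alpha1]
        has_integral_mult_right[OF powr_1]] .
  then show ?thesis
    unfolding closed_form by (rule has_integral_eq[rotated]) (simp add: expand)
qed

lemma has_integral_falling_chord_bound: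
  fixes a b \<alpha> m C D :: real
  assumes "a < b" "\<alpha> > -1"
  defines "T \<equiv> \<lambda>x. (x - a) / (b - a)"
  shows "((\<lambda>x. (1 - T x) * amc_bound \<alpha> m C D (T x)) has_integral
          (b - a) * (C / ((\<alpha> + 1) * (\<alpha> + 2))
                     + m * (\<alpha>\<^sup>2 + 3 * \<alpha>) / (2 * (\<alpha> + 1) * (\<alpha> + 2)) * D)) {a..b}"
proof -
  have const: "((\<lambda>x. m * D) has_integral m * D * (b - a)) {a..b}"
    using has_integral_const_real[of "m * D" a b] assms by (simp add: mult.commute)
  have powr_alpha1: "((\<lambda>x. T x powr (\<alpha> + 1)) has_integral (b - a) / (\<alpha> + 1 + 1)) {a..b}"
    and powr_alpha: "((\<lambda>x. T x powr \<alpha>) has_integral (b - a) / (\<alpha> + 1)) {a..b}"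
    and powr_1: "((\<lambda>x. T x powr 1) has_integral (b - a) / (1 + 1)) {a..b}"
    unfolding T_def by (rule has_integral_normalized_powr; use assms in simp)+
  have expand: "(1 - T x) * amc_bound \<alpha> m C D (T x) = m * D - m * D * T x powr 1
      + (C - m * D) * T x powr \<alpha> - (C - m * D) * T x powr (\<alpha> + 1)"
    if "x \<in> {a..b}" for x
  proof -
    have "0 \<le> T x" using that assms by (simp add: T_def)
    then show ?thesis by (simp add: amc_bound_def powr_add algebra_simps)
  qed
  have closed_form: "m * D * (b - a) - m * D * ((b - a) / (1 + 1))
      + (C - m * D) * ((b - a) / (\<alpha> + 1)) - (C - m * D) * ((b - a) / (\<alpha> + 1 + 1))
      = (b - a) * (C / ((\<alpha> + 1) * (\<alpha> + 2))
                   + m * (\<alpha>\<^sup>2 + 3 * \<alpha>) / (2 * (\<alpha> + 1) * (\<alpha> + 2)) * D)"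
  proof -
    have nz: "\<alpha> + 2 \<noteq> 0" "\<alpha> + 1 \<noteq> 0" using assms by auto
    have "C / ((\<alpha> + 1) * (\<alpha> + 2)) = C / (\<alpha> + 1) - C / (\<alpha> + 2)"
      "m * (\<alpha>\<^sup>2 + 3 * \<alpha>) / (2 * (\<alpha> + 1) * (\<alpha> + 2)) = m / 2 - m / (\<alpha> + 1) + m / (\<alpha> + 2)"
      "\<alpha> + 1 + 1 = \<alpha> + 2"
      using nz by (simp_all add: field_simps power2_eq_square)
    then show ?thesis
      by (simp only:) (simp add: algebra_simps diff_divide_distrib add_divide_distrib)
  qed
  have "((\<lambda>x. m * D - m * D * T x powr 1 + (C - m * D) * T x powr \<alpha>
              - (C - m * D) * T x powr (\<alpha> + 1)) has_integral
          m * D * (b - a) - m * D * ((b - a) / (1 + 1))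
          + (C - m * D) * ((b - a) / (\<alpha> + 1)) - (C - m * D) * ((b - a) / (\<alpha> + 1 + 1))) {a..b}"
    using has_integral_diff[OF has_integral_add[OF has_integral_diff[OF const
            has_integral_mult_right[OF powr_1]] has_integral_mult_right[OF powr_alpha]]
          has_integral_mult_right[OF powr_alpha1]] .
  then show ?thesis
    unfolding closed_form by (rule has_integral_eq[rotated]) (simp add: expand)
qed

subsection \<open>Integrability by domination\<close>

lemma nonneg_has_integral_set_integrable:
  fixes P :: "'a::euclidean_space \<Rightarrow> real"
  assumes "(P has_integral v) S" "\<And>x. x \<in> S \<Longrightarrow> 0 \<le> P x"
    and meas: "set_borel_measurable lborel S P"
  shows "set_integrable lborel S P" "(LINT x:S|lborel. P x) = v"
proof -
  have "integrable lebesgue (\<lambda>x. indicator S x *\<^sub>R P x)"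
    using nonnegative_absolutely_integrable_1[OF has_integral_integrable[OF assms(1)] assms(2)]
    unfolding set_integrable_def by simp
  then show integrable: "set_integrable lborel S P"
    using meas unfolding set_integrable_def set_borel_measurable_def
    by (subst (asm) integrable_completion) auto
  show "(LINT x:S|lborel. P x) = v"
    using set_borel_integral_eq_integral(2)[OF integrable] assms(1) by (simp add: integral_unique)
qed

lemma set_integrable_dominated:
  fixes I P :: "'a \<Rightarrow> real"
  assumes "set_integrable M S P" "set_borel_measurable M S I"
    and "\<And>x. x \<in> S \<Longrightarrow> 0 \<le> I x \<and> I x \<le> P x"
  shows "set_integrable M S I" "(LINT x:S|M. I x) \<le> (LINT x:S|M. P x)"
proof -
  show integrable: "set_integrable M S I"
    using assms by (intro set_integrable_bound[OF assms(1,2)] AE_I2) force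
  show "(LINT x:S|M. I x) \<le> (LINT x:S|M. P x)"
    using assms(3) by (intro set_integral_mono[OF integrable assms(1)]) blast
qed

text \<open>The integrand is dominated by the t-weighted sum of the chord bounds of
  f and g, where t = (x - a)/(b - a): first AM-GM, then (alpha,m)-convexity.\<close>

lemma pow0_interpolation_le_chord_bounds:
  fixes f g :: "real \<Rightarrow> real"
  assumes conv_f: "alpha_m_convex \<alpha>1 m1 K f" and conv_g: "alpha_m_convex \<alpha>2 m2 K g"
    and "\<alpha>1 \<noteq> 0" "\<alpha>2 \<noteq> 0" "0 < m1" "0 < m2"
    and "\<forall>x\<in>{0..K}. f x \<ge> 0" "\<forall>x\<in>{0..K}. g x \<ge> 0"
    and "0 \<le> a" "a < b" "b \<le> K" "a / m1 \<le> K" "a / m2 \<le> K"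
    and x: "x \<in> {a..b}"
  defines "t \<equiv> (x - a) / (b - a)"
  shows "pow0 (f x) ((x - a) / (b - a)) * pow0 (g x) ((b - x) / (b - a))
       \<le> t * amc_bound \<alpha>1 m1 (f b) (f (a / m1)) t
         + (1 - t) * amc_bound \<alpha>2 m2 (g b) (g (a / m2)) t"
proof -
  have t: "0 \<le> t" "t \<le> 1" and x_eq: "x = a + t * (b - a)"
    using x assms by (auto simp: t_def field_simps)
  have "(b - x) / (b - a) = 1 - t"
    using assms by (simp add: t_def field_simps)
  then have "pow0 (f x) ((x - a) / (b - a)) * pow0 (g x) ((b - x) / (b - a)) \<le> t * f x + (1 - t) * g x"
    using pow0_weighted_am_gm[of "f x" "g x" t] t x assms by (simp add: t_def)
  also have "\<dots> \<le> t * amc_bound \<alpha>1 m1 (f b) (f (a / m1)) t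
         + (1 - t) * amc_bound \<alpha>2 m2 (g b) (g (a / m2)) t"
  proof (intro add_mono mult_left_mono)
    have "0 \<le> a / m1" "0 \<le> a / m2" "0 \<le> b"
      using assms by (simp_all add: divide_nonneg_pos)
    then show "f x \<le> amc_bound \<alpha>1 m1 (f b) (f (a / m1)) t"
      and "g x \<le> amc_bound \<alpha>2 m2 (g b) (g (a / m2)) t"
      unfolding x_eq using t assms(3-6,11-13)
      by (auto intro!: alpha_m_convex_segment_bound[OF conv_f] alpha_m_convex_segment_bound[OF conv_g])
  qed (use t in auto)
  finally show ?thesis .
qed

text \<open>The majorant P has mean R; the stated bound is R with the coefficient
  m1 alpha1/(2(alpha1 + 2)) of f(a/m1) enlarged to m1/(2(alpha1 + 2)).\<close>

theorem theorem9:
  fixes f g :: "real \<Rightarrow> real" and K \<alpha>1 m1 \<alpha>2 m2 a b :: real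
  assumes "K > 0"
    and "0 < \<alpha>1" "\<alpha>1 \<le> 1" "0 < m1" "m1 \<le> 1"
    and "0 < \<alpha>2" "\<alpha>2 \<le> 1" "0 < m2" "m2 \<le> 1"
    and "\<forall>x\<in>{0..K}. f x \<ge> 0" "\<forall>x\<in>{0..K}. g x \<ge> 0"
    and "alpha_m_convex \<alpha>1 m1 K f" "alpha_m_convex \<alpha>2 m2 K g"
    and "0 \<le> a" "a < b" "b \<le> K" "a / m1 \<le> K" "a / m2 \<le> K"
    and "set_integrable lborel {a..b} f" "set_integrable lborel {a..b} g"
  shows "set_integrable lborel {a..b}
           (\<lambda>x. pow0 (f x) ((x - a) / (b - a)) * pow0 (g x) ((b - x) / (b - a)))
       \<and> (1 / (b - a)) * (LINT x:{a..b}|lborel.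
              pow0 (f x) ((x - a) / (b - a)) * pow0 (g x) ((b - x) / (b - a)))
         \<le> 1 / (\<alpha>1 + 2) * f b + m1 / (2 * (\<alpha>1 + 2)) * f (a / m1)
           + 1 / ((\<alpha>2 + 1) * (\<alpha>2 + 2)) * g b
           + m2 * (\<alpha>2\<^sup>2 + 3 * \<alpha>2) / (2 * (\<alpha>2 + 1) * (\<alpha>2 + 2)) * g (a / m2)"
proof -
  define T where "T x = (x - a) / (b - a)" for x
  define I where "I x = pow0 (f x) ((x - a) / (b - a)) * pow0 (g x) ((b - x) / (b - a))" for x
  define P where "P x = T x * amc_bound \<alpha>1 m1 (f b) (f (a / m1)) (T x)
    + (1 - T x) * amc_bound \<alpha>2 m2 (g b) (g (a / m2)) (T x)" for x
  define R where "R = 1 / (\<alpha>1 + 2) * f b + m1 * \<alpha>1 / (2 * (\<alpha>1 + 2)) * f (a / m1)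
    + (1 / ((\<alpha>2 + 1) * (\<alpha>2 + 2)) * g b
       + m2 * (\<alpha>2\<^sup>2 + 3 * \<alpha>2) / (2 * (\<alpha>2 + 1) * (\<alpha>2 + 2)) * g (a / m2))"
  have squeeze: "0 \<le> I x \<and> I x \<le> P x" if x: "x \<in> {a..b}" for x
  proof
    show "0 \<le> I x"
      unfolding I_def by (simp add: pow0_nonneg)
    show "I x \<le> P x"
      unfolding I_def P_def T_def
      by (rule pow0_interpolation_le_chord_bounds[OF assms(12,13)]) (use assms x in auto)
  qed
  have "(P has_integral (b - a) * R) {a..b}"
    using has_integral_add[OF has_integral_rising_chord_bound has_integral_falling_chord_bound] assms
    unfolding P_def T_def R_def by (simp add: distrib_left)
  moreover have "set_borel_measurable lborel {a..b} P"
    unfolding set_borel_measurable_def P_def T_def amc_bound_def by measurable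
  ultimately have P_int: "set_integrable lborel {a..b} P" "(LINT x:{a..b}|lborel. P x) = (b - a) * R"
    using squeeze nonneg_has_integral_set_integrable[of P] by (blast dest: order_trans)+
  have I_int: "set_integrable lborel {a..b} I" and "(LINT x:{a..b}|lborel. I x) \<le> (b - a) * R"
    using set_integrable_dominated[OF P_int(1) _ squeeze] P_int(2) assms(19,20)
      set_borel_measurable_pow0_product[of lborel "{a..b}" f g] unfolding I_def by auto
  then have "(1 / (b - a)) * (LINT x:{a..b}|lborel. I x) \<le> R"
    using assms(15) by (simp add: field_simps)
  also have "R \<le> 1 / (\<alpha>1 + 2) * f b + m1 / (2 * (\<alpha>1 + 2)) * f (a / m1)
           + 1 / ((\<alpha>2 + 1) * (\<alpha>2 + 2)) * g b
           + m2 * (\<alpha>2\<^sup>2 + 3 * \<alpha>2) / (2 * (\<alpha>2 + 1) * (\<alpha>2 + 2)) * g (a / m2)"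
    using assms by (auto simp: R_def divide_nonneg_pos intro!: mult_right_mono divide_right_mono
        mult_left_le)
  finally show ?thesis
    using I_int unfolding I_def by simp
qed

end
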